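(* Consider the streaming version of the Boolean Hidden Hypermatching problem $BHH_n^t$ (with $n=kt$ for an integer $k$), in which the binary vector $x\in\{0,1\}^n$ arrives as a stream, followed by the hyperedges of $M$ together with the Boolean vector $w$. There exists a streaming interactive proof for $BHH_n^t$ with communication and verifier space cost $O(t\log n\,\log\log n)$ bits.
   Context: $BHH_n^t$: the input is $x\in\{0,1\}^n$, a perfect $t$-uniform hypermatching $M=\{M_1,\dots,M_{n/t}\}$ on $[n]$ with $M_r=\{M_{r,1},\dots,M_{r,t}\}$, and $w\in\{0,1\}^{n/t}$. Let $Mx\in\{0,1\}^{n/t}$ have $r$-th coordinate $\bigoplus_{i=1}^t x_{M_{r,i}}$. It is promised that either $Mx\oplus w=0^{n/t}$ (YES) or $Mx\oplus w=1^{n/t}$ (NO); the goal is to decide which. A streaming interactive proof: a randomized verifier reads the stream once; afterwards it exchanges messages with a prover and outputs an answer or rejects; an honest prover makes it output the correct answer with probability at least $2/3$, and against any prover it outputs the correct answer or rejects with probability at least $2/3$. *)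

theory Defs
  imports "HOL-Probability.Probability"
begin

text \<open>Stream tokens for the streaming version of BHH: first the bits of x (in order
  x_0, ..., x_{n-1}), then the hyperedges of M, each given as the list of its t vertices
  (vertices are 0..n-1) together with the corresponding bit of w.\<close>
datatype tok = XBit bool | Edge "nat list" bool

text \<open>Each transition may use fresh randomness (hence returns a distribution); random bits that
  are to be remembered must be stored in the state and thus count towards the space.
  After the stream, there are v_rounds rounds; in round i the verifier sends a message
  (of at most v_len i bits) and the prover answers with a message, of which the verifier
  reads (at most) p_len i bits. Finally the verifier outputs Some answer, or None (reject).\<close>
record verifier =
  v_init :: "bool list"
  v_step :: "tok \<Rightarrow> bool list \<Rightarrow> bool list pmf"
  v_rounds :: nat
  v_msg :: "nat \<Rightarrow> bool list \<Rightarrow> (bool list \<times> bool list) pmf"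
  v_recv :: "nat \<Rightarrow> bool list \<Rightarrow> bool list \<Rightarrow> bool list pmf"
  v_out :: "bool list \<Rightarrow> bool option pmf"
  v_len :: "nat \<Rightarrow> nat"
  p_len :: "nat \<Rightarrow> nat"

text \<open>A (deterministic, w.l.o.g.) prover maps the list of verifier messages received so far
  to its next message.\<close>
type_synonym prover = "bool list list \<Rightarrow> bool list"

fun run_stream :: "verifier \<Rightarrow> tok list \<Rightarrow> bool list \<Rightarrow> bool list pmf" where
  "run_stream V [] \<sigma> = return_pmf \<sigma>"
| "run_stream V (a # as) \<sigma> = bind_pmf (v_step V a \<sigma>) (run_stream V as)"

fun run_rounds :: "verifier \<Rightarrow> prover \<Rightarrow> nat \<Rightarrow> bool list list \<Rightarrow> bool list \<Rightarrow> bool list pmf" where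
  "run_rounds V P 0 ms \<sigma> = return_pmf \<sigma>"
| "run_rounds V P (Suc r) ms \<sigma> =
     bind_pmf (v_msg V (length ms) \<sigma>) (\<lambda>(m, \<sigma>').
       bind_pmf (v_recv V (length ms) \<sigma>' (take (p_len V (length ms)) (P (ms @ [m]))))
         (run_rounds V P r (ms @ [m])))"

definition outcome :: "verifier \<Rightarrow> prover \<Rightarrow> tok list \<Rightarrow> bool option pmf" where
  "outcome V P xs =
     bind_pmf (run_stream V xs (v_init V))
       (\<lambda>\<sigma>. bind_pmf (run_rounds V P (v_rounds V) [] \<sigma>) (v_out V))"

definition space_bounded :: "verifier \<Rightarrow> nat \<Rightarrow> bool" where
  "space_bounded V s \<longleftrightarrow>
     length (v_init V) \<le> s
   \<and> (\<forall>a \<sigma>. \<forall>\<sigma>' \<in> set_pmf (v_step V a \<sigma>). length \<sigma>' \<le> s)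
   \<and> (\<forall>i \<sigma>. \<forall>(m, \<sigma>') \<in> set_pmf (v_msg V i \<sigma>). length \<sigma>' \<le> s \<and> length m \<le> v_len V i)
   \<and> (\<forall>i \<sigma> a. \<forall>\<sigma>' \<in> set_pmf (v_recv V i \<sigma> a). length \<sigma>' \<le> s)"

definition comm :: "verifier \<Rightarrow> nat" where
  "comm V = (\<Sum>i<v_rounds V. v_len V i + p_len V i)"

definition perfect_hypermatching :: "nat \<Rightarrow> nat \<Rightarrow> nat list list \<Rightarrow> bool" where
  "perfect_hypermatching n t Ms \<longleftrightarrow>
     (\<forall>e \<in> set Ms. distinct e \<and> length e = t \<and> set e \<subseteq> {..<n})
   \<and> (\<forall>i j. i < length Ms \<and> j < length Ms \<and> i \<noteq> j \<longrightarrow> set (Ms ! i) \<inter> set (Ms ! j) = {})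
   \<and> (\<Union>e \<in> set Ms. set e) = {..<n}"

definition edge_parity :: "(nat \<Rightarrow> bool) \<Rightarrow> nat list \<Rightarrow> bool" where
  "edge_parity x e = odd (length (filter x e))"

definition bhh_yes :: "(nat \<Rightarrow> bool) \<Rightarrow> nat list list \<Rightarrow> bool list \<Rightarrow> bool" where
  "bhh_yes x Ms w \<longleftrightarrow> (\<forall>r < length Ms. edge_parity x (Ms ! r) = w ! r)"

definition bhh_no :: "(nat \<Rightarrow> bool) \<Rightarrow> nat list list \<Rightarrow> bool list \<Rightarrow> bool" where
  "bhh_no x Ms w \<longleftrightarrow> (\<forall>r < length Ms. edge_parity x (Ms ! r) \<noteq> w ! r)"

definition bhh_instance :: "nat \<Rightarrow> nat \<Rightarrow> (nat \<Rightarrow> bool) \<Rightarrow> nat list list \<Rightarrow> bool list \<Rightarrow> bool" where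
  "bhh_instance n t x Ms w \<longleftrightarrow>
     perfect_hypermatching n t Ms \<and> length w = length Ms \<and> (bhh_yes x Ms w \<or> bhh_no x Ms w)"

definition bhh_stream :: "nat \<Rightarrow> (nat \<Rightarrow> bool) \<Rightarrow> nat list list \<Rightarrow> bool list \<Rightarrow> tok list" where
  "bhh_stream n x Ms w = map (\<lambda>i. XBit (x i)) [0..<n] @ map (\<lambda>(e, b). Edge e b) (zip Ms w)"

definition sip_for_bhh :: "nat \<Rightarrow> nat \<Rightarrow> verifier \<Rightarrow> bool" where
  "sip_for_bhh n t V \<longleftrightarrow>
    (\<forall>x Ms w. bhh_instance n t x Ms w \<longrightarrow>
      (let ans = bhh_yes x Ms w; s = bhh_stream n x Ms w in
        (\<exists>P. measure_pmf.prob (outcome V P s) {Some ans} \<ge> 2/3)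
      \<and> (\<forall>P. measure_pmf.prob (outcome V P s) {Some ans, None} \<ge> 2/3)))"

end

theory Submission
  imports Defs "HOL-Computational_Algebra.Primes" "HOL-Library.Log_Nat"
begin

text \<open>By the promise, the answer is already determined by the first hyperedge \<open>e\<close> and its
  bit \<open>b\<close>: YES iff \<open>|x \<inter> e|\<close> has parity \<open>b\<close>. Writing \<open>|x \<inter> e| = \<Sum>\<^sub>j f j * g j\<close> over the
  cube \<open>{0,1}\<^sup>\<ell>\<close>, \<open>\<ell> = \<lceil>log n\<rceil>\<close>, with \<open>f\<close>, \<open>g\<close> the indicators of \<open>x\<close> and \<open>e\<close>, the verifier runs
  the sum-check protocol over \<open>\<int>/p\<close> for a prime \<open>p > max t (6\<ell>)\<close> with \<open>log p = O(log (t + \<ell>))\<close>.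
  It draws its random point \<open>r\<close> before the stream and evaluates the multilinear extensions of
  \<open>f\<close> and \<open>g\<close> at \<open>r\<close> while streaming, using \<open>O(\<ell> log p)\<close> bits. The honest prover's claim
  \<open>|x \<inter> e| mod p\<close> determines the parity since \<open>|x \<inter> e| \<le> t < p\<close>; a cheating prover survives
  only if in some round a wrong quadratic agrees with the true one at the random coordinate,
  which has probability at most \<open>2\<ell>/p < 1/3\<close>.\<close>

lemma prime_power_dvd_iff_le_multiplicity_bounded:
  fixes p m N :: nat
  assumes "prime p" "0 < m" "m \<le> N"
  shows "{i \<in> {1..N}. p ^ i dvd m} = {1..multiplicity p m}"
proof -
  have "i \<le> N" if "i \<le> multiplicity p m" for i
  proof -
    have "p ^ i dvd m" using that by (rule multiplicity_dvd')
    hence "p ^ i \<le> m" using assms(2) by (rule dvd_imp_le)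
    moreover have "i < 2 ^ i" by (rule less_exp)
    moreover have "(2::nat) ^ i \<le> p ^ i" using prime_ge_2_nat[OF assms(1)] by (rule power_mono) simp
    ultimately show ?thesis using assms(3) by linarith
  qed
  moreover have "p ^ i dvd m \<longleftrightarrow> i \<le> multiplicity p m" for i
    using power_dvd_iff_le_multiplicity[of m p i] assms prime_gt_1_nat[OF assms(1)] by simp
  ultimately show ?thesis by (simp only: Collect_conj_eq atLeastAtMost_iff) fastforce
qed

text \<open>Legendre's formula; summing up to any bound \<open>N \<ge> n\<close> lets all the sums below share one range.\<close>
lemma multiplicity_fact_nat:
  fixes p n N :: nat
  assumes p: "prime p" and "n \<le> N"
  shows "multiplicity p (fact n :: nat) = (\<Sum>i\<in>{1..N}. n div p ^ i)"
  using \<open>n \<le> N\<close>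
proof (induction n)
  case 0
  then show ?case by simp
next
  case (Suc n)
  have p_pow_pos: "p ^ i > 0" for i using prime_gt_0_nat[OF p] by simp
  have fact_Suc_nat: "(fact (Suc n) :: nat) = Suc n * fact n" by (simp only: fact_Suc of_nat_id)
  have "multiplicity p (fact (Suc n) :: nat) = multiplicity p (Suc n) + multiplicity p (fact n :: nat)"
    unfolding fact_Suc_nat by (rule prime_elem_multiplicity_mult_distrib) (use p in auto)
  also have "multiplicity p (Suc n) = card {i \<in> {1..N}. p ^ i dvd Suc n}"
    using prime_power_dvd_iff_le_multiplicity_bounded[OF p _ Suc.prems] by simp
  also have "\<dots> = (\<Sum>i\<in>{1..N}. if p ^ i dvd Suc n then 1 else 0)"
    by (subst sum.inter_filter[symmetric]) auto
  also have "multiplicity p (fact n :: nat) = (\<Sum>i\<in>{1..N}. n div p ^ i)"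
    using Suc by simp
  also have "(\<Sum>i\<in>{1..N}. if p ^ i dvd Suc n then 1 else 0) + \<dots> = (\<Sum>i\<in>{1..N}. Suc n div p ^ i)"
    by (subst sum.distrib[symmetric], rule sum.cong) (auto simp: div_Suc mod_eq_0_iff_dvd p_pow_pos)
  finally show ?case .
qed

lemma double_div_bounds:
  fixes m q :: nat
  shows "2 * (m div q) \<le> 2 * m div q" and "2 * m div q \<le> 2 * (m div q) + 1"
proof -
  have "2 * m div q = 2 * (m div q) + 2 * (m mod q) div q"
  proof (cases "q = 0")
    case False
    have "2 * m = q * (2 * (m div q)) + 2 * (m mod q)"
      using div_mult_mod_eq[of m q] by (metis add_mult_distrib2 mult.commute mult.left_commute)
    thus ?thesis using False by simp
  qed simp
  moreover have "2 * (m mod q) div q \<le> 1"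
    using less_mult_imp_div_less[of "2 * (m mod q)" 2 q] by (cases "q = 0") (simp_all add: mult.commute)
  ultimately show "2 * (m div q) \<le> 2 * m div q" and "2 * m div q \<le> 2 * (m div q) + 1"
    by simp_all
qed

lemma multiplicity_central_binomial:
  fixes p m :: nat
  assumes p: "prime p"
  shows "multiplicity p ((2 * m) choose m) = (\<Sum>i\<in>{1..2*m}. 2 * m div p ^ i - 2 * (m div p ^ i))"
proof -
  have "fact m * fact m * ((2 * m) choose m) = (fact (2 * m) :: nat)"
    using binomial_fact_lemma[of m "2 * m"] by simp
  moreover have "multiplicity p (fact m * fact m * ((2 * m) choose m) :: nat)
      = multiplicity p (fact m :: nat) + multiplicity p (fact m :: nat) + multiplicity p ((2 * m) choose m)"
    using p by (simp add: prime_elem_multiplicity_mult_distrib)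
  ultimately have "multiplicity p (fact m :: nat) + multiplicity p (fact m :: nat) + multiplicity p ((2 * m) choose m)
      = multiplicity p (fact (2 * m) :: nat)"
    by simp
  moreover have "multiplicity p (fact m :: nat) = (\<Sum>i\<in>{1..2*m}. m div p ^ i)"
    and "multiplicity p (fact (2 * m) :: nat) = (\<Sum>i\<in>{1..2*m}. 2 * m div p ^ i)"
    by (rule multiplicity_fact_nat[OF p], simp)+
  moreover have "(\<Sum>i\<in>{1..2*m}. 2 * (m div p ^ i)) = 2 * (\<Sum>i\<in>{1..2*m}. m div p ^ i)"
    by (simp add: sum_distrib_left)
  ultimately have "(\<Sum>i\<in>{1..2*m}. 2 * (m div p ^ i)) + multiplicity p ((2 * m) choose m)
      = (\<Sum>i\<in>{1..2*m}. 2 * m div p ^ i)"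
    by linarith
  thus ?thesis
    using double_div_bounds(1) by (simp add: sum_subtractf_nat)
qed

text \<open>In Legendre's formula for \<open>(2m choose m)\<close> each term is 0 or 1, and it vanishes once
  \<open>p\<^sup>i > 2m\<close>.\<close>
lemma prime_power_multiplicity_central_binomial_le:
  fixes p m :: nat
  assumes p: "prime p" and "0 < m"
  shows "p ^ multiplicity p ((2 * m) choose m) \<le> 2 * m"
proof (rule ccontr)
  define v where "v = multiplicity p ((2 * m) choose m)"
  assume "\<not> p ^ multiplicity p ((2 * m) choose m) \<le> 2 * m"
  hence large: "2 * m < p ^ v" and "0 < v"
    using \<open>0 < m\<close> by (auto simp: v_def[symmetric] intro: Nat.gr0I)
  have "v = (\<Sum>i\<in>{1..2*m}. 2 * m div p ^ i - 2 * (m div p ^ i))"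
    unfolding v_def by (rule multiplicity_central_binomial[OF p])
  also have "\<dots> \<le> (\<Sum>i\<in>{1..2*m}. if i < v then 1 else 0)"
  proof (rule sum_mono)
    fix i
    have "2 * m < p ^ i" if "v \<le> i"
      using large power_increasing[OF that, of p] prime_ge_1_nat[OF p] by linarith
    thus "2 * m div p ^ i - 2 * (m div p ^ i) \<le> (if i < v then 1 else 0)"
      using double_div_bounds(2)[of m "p ^ i"] by auto
  qed
  also have "\<dots> = card ({1..2*m} \<inter> {..<v})" by (simp add: sum.If_cases lessThan_def)
  also have "\<dots> \<le> card {1..<v}" by (rule card_mono) auto
  finally show False using \<open>0 < v\<close> by simp
qed

lemma two_power_le_central_binomial: "2 ^ m \<le> (2 * m) choose m"
proof -
  have "(2::nat) ^ m = (\<Sum>k\<le>m. m choose k)" by (simp add: choose_row_sum)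
  also have "\<dots> \<le> (\<Sum>k\<le>m. (m choose k)\<^sup>2)"
    by (rule sum_mono) (simp add: power2_eq_square le_square)
  also have "\<dots> = (2 * m) choose m" by (rule choose_square_sum)
  finally show ?thesis .
qed

text \<open>A weak Bertrand postulate, enough to find a modulus of \<open>O(b)\<close> bits exceeding \<open>2\<^sup>b\<close>.
  With \<open>m = 2\<^sup>2\<^sup>b\<^sup>+\<^sup>6\<close>, if no prime lay in \<open>(2\<^sup>b, 2m]\<close>, then \<open>(2m choose m)\<close> would have at most
  \<open>2\<^sup>b\<close> prime factors, each contributing at most \<open>2m\<close>, contradicting \<open>2\<^sup>m \<le> (2m choose m)\<close>.\<close>
lemma prime_between_powers_of_two: "\<exists>p::nat. prime p \<and> 2 ^ b < p \<and> p \<le> 2 ^ (2 * b + 7)"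
proof (rule ccontr)
  assume no_prime: "\<not> ?thesis"
  define m :: nat where "m = 2 ^ (2 * b + 6)"
  have two_m: "2 * m = 2 ^ (2 * b + 7)" by (simp add: m_def power_add)
  have "prime_factors ((2 * m) choose m) \<subseteq> {2..2 ^ b}"
  proof
    fix p assume "p \<in> prime_factors ((2 * m) choose m)"
    hence p: "prime p" and "p dvd (2 * m) choose m" by auto
    moreover have "((2 * m) choose m) dvd fact (2 * m)"
      using binomial_fact_lemma[of m "2 * m"] by (metis dvd_triv_right le_add2 mult_2)
    ultimately have "p \<le> 2 * m" using prime_dvd_fact_iff dvd_trans by blast
    hence "\<not> 2 ^ b < p" using no_prime p two_m by auto
    thus "p \<in> {2..2 ^ b}" using prime_ge_2_nat[OF p] by simp
  qed
  hence "card (prime_factors ((2 * m) choose m)) \<le> card {2..(2::nat) ^ b}"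
    by (rule card_mono[rotated]) simp
  hence card_pf: "card (prime_factors ((2 * m) choose m)) \<le> 2 ^ b" by simp
  have "2 ^ m \<le> (2 * m) choose m" by (rule two_power_le_central_binomial)
  also have "\<dots> = (\<Prod>p\<in>prime_factors ((2 * m) choose m). p ^ multiplicity p ((2 * m) choose m))"
    by (rule prime_factorization_nat) simp
  also have "\<dots> \<le> (\<Prod>p\<in>prime_factors ((2 * m) choose m). 2 * m)"
    by (rule prod_mono) (auto intro: prime_power_multiplicity_central_binomial_le simp: m_def)
  also have "\<dots> = (2 * m) ^ card (prime_factors ((2 * m) choose m))" by (rule prod_constant)
  also have "\<dots> \<le> (2 * m) ^ 2 ^ b"
    using card_pf by (rule power_increasing) (simp add: m_def)
  also have "\<dots> = 2 ^ ((2 * b + 7) * 2 ^ b)" unfolding two_m by (rule power_mult[symmetric])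
  finally have "m \<le> (2 * b + 7) * 2 ^ b" by (rule power_le_imp_le_exp[rotated]) simp
  moreover have "(2 * b + 7) * 2 ^ b < m"
  proof -
    have "2 * b + 7 < 2 ^ b * 64" using less_exp[of b] by linarith
    hence "(2 * b + 7) * 2 ^ b < (2 ^ b * 64) * 2 ^ b" by simp
    also have "\<dots> = 2 ^ (b + b + 6)" by (simp only: power_add) simp
    also have "b + b + 6 = 2 * b + 6" by simp
    finally show ?thesis by (simp only: m_def)
  qed
  ultimately show False by linarith
qed

text \<open>A table \<open>f :: nat \<Rightarrow> int\<close> lists the values of a function on the Boolean cube, the
  \<open>k\<close>-th variable being bit \<open>k\<close> of the index. \<open>eval_low r f\<close> fixes the lowest variable to \<open>r\<close>
  by multilinear interpolation.\<close>
definition eval_low :: "nat \<Rightarrow> (nat \<Rightarrow> int) \<Rightarrow> nat \<Rightarrow> int" where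
  "eval_low r f = (\<lambda>j. (1 - int r) * f (2 * j) + int r * f (2 * j + 1))"

fun eval_prefix :: "nat list \<Rightarrow> (nat \<Rightarrow> int) \<Rightarrow> nat \<Rightarrow> int" where
  "eval_prefix [] f = f"
| "eval_prefix (r # rs) f = eval_prefix rs (eval_low r f)"

fun mle_basis :: "nat \<Rightarrow> nat list \<Rightarrow> int" where
  "mle_basis i [] = 1"
| "mle_basis i (r # rs) = (if odd i then int r else 1 - int r) * mle_basis (i div 2) rs"

definition cube_inner :: "nat \<Rightarrow> (nat \<Rightarrow> int) \<Rightarrow> (nat \<Rightarrow> int) \<Rightarrow> int" where
  "cube_inner k f g = (\<Sum>j<2 ^ k. f j * g j)"

lemma sum_lessThan_two_power_Suc:
  fixes h :: "nat \<Rightarrow> 'a::comm_monoid_add"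
  shows "(\<Sum>i<2 ^ Suc k. h i) = (\<Sum>j<2 ^ k. h (2 * j) + h (2 * j + 1))"
proof -
  have "(\<Sum>i<2 * m. h i) = (\<Sum>j<m. h (2 * j) + h (2 * j + 1))" for m
    by (induction m) (simp_all add: add.assoc)
  thus ?thesis by simp
qed

lemma eval_prefix_0_eq_mle: "eval_prefix rs f 0 = (\<Sum>i<2 ^ length rs. f i * mle_basis i rs)"
proof (induction rs arbitrary: f)
  case Nil
  then show ?case by simp
next
  case (Cons r rs)
  have "eval_prefix (r # rs) f 0 = (\<Sum>j<2 ^ length rs. eval_low r f j * mle_basis j rs)"
    using Cons.IH by simp
  also have "\<dots> = (\<Sum>j<2 ^ length rs. f (2 * j) * mle_basis (2 * j) (r # rs)
                                       + f (2 * j + 1) * mle_basis (2 * j + 1) (r # rs))"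
    by (rule sum.cong) (simp_all add: eval_low_def algebra_simps)
  also have "\<dots> = (\<Sum>i<2 ^ length (r # rs). f i * mle_basis i (r # rs))"
    by (simp only: sum_lessThan_two_power_Suc length_Cons)
  finally show ?case .
qed

lemma eval_prefix_snoc: "eval_prefix (rs @ [r]) f = eval_low r (eval_prefix rs f)"
  by (induction rs arbitrary: f) simp_all

lemma cube_inner_0: "cube_inner 0 f g = f 0 * g 0"
  by (simp add: cube_inner_def)

type_synonym quad = "int \<times> int \<times> int"

fun quad_eval :: "quad \<Rightarrow> int \<Rightarrow> int" where
  "quad_eval (a, b, c) r = a + b * r + c * r\<^sup>2"

definition quad_sum01 :: "quad \<Rightarrow> int" where
  "quad_sum01 q = quad_eval q 0 + quad_eval q 1"

text \<open>The coefficients of the quadratic \<open>r \<mapsto> cube_inner k (eval_low r f) (eval_low r g)\<close>.\<close>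
definition round_poly :: "nat \<Rightarrow> (nat \<Rightarrow> int) \<Rightarrow> (nat \<Rightarrow> int) \<Rightarrow> quad" where
  "round_poly k f g =
     ((\<Sum>j<2 ^ k. f (2 * j) * g (2 * j)),
      (\<Sum>j<2 ^ k. f (2 * j) * (g (2 * j + 1) - g (2 * j)) + g (2 * j) * (f (2 * j + 1) - f (2 * j))),
      (\<Sum>j<2 ^ k. (f (2 * j + 1) - f (2 * j)) * (g (2 * j + 1) - g (2 * j))))"

lemma quad_sum01_round_poly: "quad_sum01 (round_poly k f g) = cube_inner (Suc k) f g"
proof -
  have "quad_sum01 (round_poly k f g) = (\<Sum>j<2 ^ k. f (2 * j) * g (2 * j) + f (2 * j + 1) * g (2 * j + 1))"
    unfolding quad_sum01_def round_poly_def
    by (simp add: sum.distrib[symmetric] algebra_simps sum_subtractf)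
  also have "\<dots> = cube_inner (Suc k) f g"
    unfolding cube_inner_def by (simp only: sum_lessThan_two_power_Suc)
  finally show ?thesis .
qed

lemma quad_eval_round_poly: "quad_eval (round_poly k f g) (int r) = cube_inner k (eval_low r f) (eval_low r g)"
  unfolding round_poly_def cube_inner_def eval_low_def
  by (simp add: sum_distrib_left sum.distrib[symmetric] algebra_simps power2_eq_square)

definition quad_cong :: "nat \<Rightarrow> quad \<Rightarrow> quad \<Rightarrow> bool" where
  "quad_cong p c d \<longleftrightarrow> (\<forall>r. quad_eval c r mod int p = quad_eval d r mod int p)"

lemma quad_cong_eval: "quad_cong p c d \<Longrightarrow> quad_eval c r mod int p = quad_eval d r mod int p"
  by (simp add: quad_cong_def)

lemma quad_cong_sum01: "quad_cong p c d \<Longrightarrow> quad_sum01 c mod int p = quad_sum01 d mod int p"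
  unfolding quad_sum01_def quad_cong_def by (metis mod_add_eq)

lemma quad_cong_mod: "quad_cong p (a mod int p, b mod int p, c mod int p) (a, b, c)"
  unfolding quad_cong_def quad_eval.simps by (intro allI mod_add_cong mod_mult_cong) simp_all

lemma int_diff_not_dvd:
  fixes a b p :: nat
  assumes "a < p" "b < p" "a \<noteq> b"
  shows "\<not> int p dvd int a - int b"
proof
  assume "int p dvd int a - int b"
  hence "\<bar>int p\<bar> \<le> \<bar>int a - int b\<bar>" using assms(3) by (intro dvd_imp_le_int) auto
  thus False using assms by linarith
qed

text \<open>Over \<open>\<int>/p\<close>, a quadratic with three distinct roots vanishes: dividing out the
  roots one at a time forces all three coefficients to vanish.\<close>
lemma quad_cong_if_three_agreements:
  fixes p a b x :: nat
  assumes p: "prime p" and "a < p" "b < p" "x < p" "a \<noteq> b" "a \<noteq> x" "b \<noteq> x"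
    and agree: "\<And>z. z \<in> {a, b, x} \<Longrightarrow> quad_eval c (int z) mod int p = quad_eval d (int z) mod int p"
  shows "quad_cong p c d"
proof -
  obtain c0 c1 c2 d0 d1 d2 where cd: "c = (c0, c1, c2)" "d = (d0, d1, d2)"
    by (cases c, cases d) auto
  define e0 e1 e2 where "e0 = c0 - d0" and "e1 = c1 - d1" and "e2 = c2 - d2"
  have P: "prime (int p)" using p by simp
  have cong_iff: "quad_eval c r mod int p = quad_eval d r mod int p \<longleftrightarrow> int p dvd e0 + e1 * r + e2 * r\<^sup>2" for r
    by (simp add: cd e0_def e1_def e2_def mod_eq_dvd_iff algebra_simps)
  have root: "int p dvd e0 + e1 * int z + e2 * (int z)\<^sup>2" if "z \<in> {a, b, x}" for z
    using agree[OF that] cong_iff by simp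
  have factor: "int p dvd e1 + e2 * (int y + int z)" if "y \<in> {a, b, x}" "z \<in> {a, b, x}" "y \<noteq> z" for y z
  proof -
    have "int p dvd (e0 + e1 * int y + e2 * (int y)\<^sup>2) - (e0 + e1 * int z + e2 * (int z)\<^sup>2)"
      using root that by (intro dvd_diff) auto
    also have "(e0 + e1 * int y + e2 * (int y)\<^sup>2) - (e0 + e1 * int z + e2 * (int z)\<^sup>2)
        = (int y - int z) * (e1 + e2 * (int y + int z))"
      by (simp add: algebra_simps power2_eq_square)
    finally show ?thesis
      using P int_diff_not_dvd[of y p z] that assms(2-4) by (auto simp: prime_dvd_mult_iff)
  qed
  have "int p dvd (e1 + e2 * (int a + int b)) - (e1 + e2 * (int a + int x))"
    using factor[of a b] factor[of a x] assms(5,6) by (intro dvd_diff) auto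
  also have "(e1 + e2 * (int a + int b)) - (e1 + e2 * (int a + int x)) = (int b - int x) * e2"
    by (simp add: algebra_simps)
  finally have d2: "int p dvd e2"
    using P int_diff_not_dvd[of b p x] assms(3,4,7) by (auto simp: prime_dvd_mult_iff)
  hence d1: "int p dvd e1"
    using factor[of a b] assms(5) by (simp add: dvd_add_left_iff)
  hence "int p dvd e0"
    using root[of a] d2 by (simp add: dvd_add_left_iff add.assoc)
  with d1 d2 show ?thesis
    unfolding quad_cong_def cong_iff by simp
qed

definition agreements :: "nat \<Rightarrow> quad \<Rightarrow> quad \<Rightarrow> nat set" where
  "agreements p c d = {z \<in> {..<p}. quad_eval c (int z) mod int p = quad_eval d (int z) mod int p}"

lemma card_agreements_le_2:
  assumes "prime p" and "\<not> quad_cong p c d"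
  shows "card (agreements p c d) \<le> 2"
proof (rule ccontr)
  assume "\<not> card (agreements p c d) \<le> 2"
  then obtain T where "T \<subseteq> agreements p c d" "card T = 3"
    using obtain_subset_with_card_n[of 3 "agreements p c d"] by auto
  then obtain a b x where "a \<in> agreements p c d" "b \<in> agreements p c d" "x \<in> agreements p c d"
      "a \<noteq> b" "a \<noteq> x" "b \<noteq> x"
    by (auto simp: card_3_iff)
  thus False
    using quad_cong_if_three_agreements[OF assms(1), of a b x c d] assms(2)
    by (auto simp: agreements_def)
qed

definition residue_lists :: "nat \<Rightarrow> nat \<Rightarrow> nat list set" where
  "residue_lists p k = {rs. set rs \<subseteq> {..<p} \<and> length rs = k}"

lemma card_residue_lists: "card (residue_lists p k) = p ^ k"
  unfolding residue_lists_def using card_lists_length_eq[of "{..<p}" k] by simp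

lemma finite_residue_lists: "finite (residue_lists p k)"
  unfolding residue_lists_def by (rule finite_lists_length_eq) simp

text \<open>\<open>A\<close> is a prover strategy, mapping the random coordinates revealed so far to the next
  quadratic; \<open>B\<close> gives the true quadratics.\<close>
definition lucky_points :: "nat \<Rightarrow> nat \<Rightarrow> (nat list \<Rightarrow> quad) \<Rightarrow> (nat list \<Rightarrow> quad) \<Rightarrow> nat list set" where
  "lucky_points p k A B = {rs \<in> residue_lists p k. \<exists>i<k.
      \<not> quad_cong p (A (take i rs)) (B (take i rs)) \<and> rs ! i \<in> agreements p (A (take i rs)) (B (take i rs))}"

lemma lucky_points_Suc_subset:
  "lucky_points p (Suc k) A B \<subseteq>
     (\<lambda>(a, rs). a # rs) ` ({a \<in> agreements p (A []) (B []). \<not> quad_cong p (A []) (B [])} \<times> residue_lists p k)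
   \<union> (\<Union>a<p. (#) a ` lucky_points p k (\<lambda>rs. A (a # rs)) (\<lambda>rs. B (a # rs)))"
proof
  fix rs assume lucky: "rs \<in> lucky_points p (Suc k) A B"
  then obtain a l where rs: "rs = a # l" "a < p" "l \<in> residue_lists p k"
    by (cases rs) (auto simp: lucky_points_def residue_lists_def)
  from lucky obtain i where "i < Suc k" "\<not> quad_cong p (A (take i rs)) (B (take i rs))"
    "rs ! i \<in> agreements p (A (take i rs)) (B (take i rs))"
    by (auto simp: lucky_points_def)
  with rs show "rs \<in> (\<lambda>(a, rs). a # rs) ` ({a \<in> agreements p (A []) (B []). \<not> quad_cong p (A []) (B [])} \<times> residue_lists p k)
      \<union> (\<Union>a<p. (#) a ` lucky_points p k (\<lambda>rs. A (a # rs)) (\<lambda>rs. B (a # rs)))"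
    by (cases i) (force simp: lucky_points_def)+
qed

lemma card_lucky_points_Suc_le:
  assumes "prime p"
  shows "card (lucky_points p (Suc k) A B)
    \<le> 2 * p ^ k + (\<Sum>a<p. card (lucky_points p k (\<lambda>rs. A (a # rs)) (\<lambda>rs. B (a # rs))))"
proof -
  define R where "R = {a \<in> agreements p (A []) (B []). \<not> quad_cong p (A []) (B [])}"
  define L where "L = (\<lambda>a. lucky_points p k (\<lambda>rs. A (a # rs)) (\<lambda>rs. B (a # rs)))"
  have card_R: "card R \<le> 2"
    using card_agreements_le_2[OF assms] by (cases "quad_cong p (A []) (B [])") (auto simp: R_def)
  have finite_L: "finite (L a)" for a
    by (rule finite_subset[OF _ finite_residue_lists]) (auto simp: L_def lucky_points_def)
  have finite_R: "finite R" by (simp add: R_def agreements_def)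
  have "card (lucky_points p (Suc k) A B)
      \<le> card ((\<lambda>(a, rs). a # rs) ` (R \<times> residue_lists p k) \<union> (\<Union>a<p. (#) a ` L a))"
    using lucky_points_Suc_subset[of p k A B] finite_L finite_R
    by (intro card_mono) (auto simp: R_def L_def finite_residue_lists)
  also have "\<dots> \<le> card ((\<lambda>(a, rs). a # rs) ` (R \<times> residue_lists p k)) + card (\<Union>a<p. (#) a ` L a)"
    by (rule card_Un_le)
  also have "\<dots> \<le> card R * p ^ k + (\<Sum>a<p. card (L a))"
  proof (rule add_mono)
    show "card ((\<lambda>(a, rs). a # rs) ` (R \<times> residue_lists p k)) \<le> card R * p ^ k"
      using card_image_le[of "R \<times> residue_lists p k" "\<lambda>(a, rs). a # rs"] finite_R
      by (simp add: card_cartesian_product card_residue_lists finite_residue_lists)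
    have "card (\<Union>a<p. (#) a ` L a) \<le> (\<Sum>a<p. card ((#) a ` L a))"
      by (rule card_UN_le) simp
    also have "\<dots> = (\<Sum>a<p. card (L a))"
      by (simp add: card_image)
    finally show "card (\<Union>a<p. (#) a ` L a) \<le> (\<Sum>a<p. card (L a))" .
  qed
  finally show ?thesis
    using card_R unfolding L_def by (meson add_le_mono1 mult_le_mono1 order_trans)
qed

text \<open>Schwartz-Zippel for adaptive strategies: each round contributes a fraction \<open>2/p\<close>.\<close>
lemma card_lucky_points:
  assumes "prime p"
  shows "card (lucky_points p k A B) * p \<le> 2 * k * p ^ k"
proof (induction k arbitrary: A B)
  case 0
  then show ?case by (simp add: lucky_points_def)
next
  case (Suc k)
  have "card (lucky_points p (Suc k) A B) * p
      \<le> 2 * p ^ k * p + (\<Sum>a<p. card (lucky_points p k (\<lambda>rs. A (a # rs)) (\<lambda>rs. B (a # rs))) * p)"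
    using mult_right_mono[OF card_lucky_points_Suc_le[OF assms, of k A B], of p]
    by (simp add: algebra_simps sum_distrib_left)
  also have "\<dots> \<le> 2 * p ^ k * p + (\<Sum>a<p. 2 * k * p ^ k)"
    using Suc.IH by (intro add_mono sum_mono) auto
  also have "\<dots> = 2 * Suc k * p ^ Suc k"
    by (simp add: algebra_simps)
  finally show ?case .
qed

definition honest_poly :: "nat \<Rightarrow> (nat \<Rightarrow> int) \<Rightarrow> (nat \<Rightarrow> int) \<Rightarrow> nat list \<Rightarrow> quad" where
  "honest_poly k f g pre = round_poly (k - Suc (length pre)) (eval_prefix pre f) (eval_prefix pre g)"

definition partial_sum :: "nat list \<Rightarrow> (nat \<Rightarrow> int) \<Rightarrow> (nat \<Rightarrow> int) \<Rightarrow> nat \<Rightarrow> int" where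
  "partial_sum rs f g i = cube_inner (length rs - i) (eval_prefix (take i rs) f) (eval_prefix (take i rs) g)"

lemma quad_sum01_honest_poly:
  "i < length rs \<Longrightarrow> quad_sum01 (honest_poly (length rs) f g (take i rs)) = partial_sum rs f g i"
  by (simp add: honest_poly_def partial_sum_def quad_sum01_round_poly Suc_diff_Suc)

lemma quad_eval_honest_poly:
  assumes "i < length rs"
  shows "quad_eval (honest_poly (length rs) f g (take i rs)) (int (rs ! i)) = partial_sum rs f g (Suc i)"
proof -
  have "take (Suc i) rs = take i rs @ [rs ! i]" using assms by (simp add: take_Suc_conv_app_nth)
  thus ?thesis using assms
    by (simp add: honest_poly_def partial_sum_def quad_eval_round_poly eval_prefix_snoc)
qed

lemma partial_sum_0: "partial_sum rs f g 0 = cube_inner (length rs) f g"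
  by (simp add: partial_sum_def)

lemma partial_sum_length: "partial_sum rs f g (length rs) = eval_prefix rs f 0 * eval_prefix rs g 0"
  by (simp add: partial_sum_def cube_inner_0)

text \<open>\<open>v\<close> is the product of the multilinear extensions of \<open>f\<close> and \<open>g\<close> at \<open>rs\<close>, which the
  verifier computes itself.\<close>
definition sumcheck_accepts :: "nat \<Rightarrow> nat list \<Rightarrow> (nat list \<Rightarrow> quad) \<Rightarrow> int \<Rightarrow> bool" where
  "sumcheck_accepts p rs A v \<longleftrightarrow>
     (\<forall>j. 0 < j \<and> j < length rs \<longrightarrow>
        quad_sum01 (A (take j rs)) mod int p = quad_eval (A (take (j - 1) rs)) (int (rs ! (j - 1))) mod int p)
   \<and> quad_eval (A (take (length rs - 1) rs)) (int (rs ! (length rs - 1))) mod int p = v mod int p"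

lemma quad_cong_if_not_lucky:
  assumes rs: "rs \<in> residue_lists p k" and "rs \<notin> lucky_points p k A B" and i: "i < k"
    and "quad_eval (A (take i rs)) (int (rs ! i)) mod int p = quad_eval (B (take i rs)) (int (rs ! i)) mod int p"
  shows "quad_cong p (A (take i rs)) (B (take i rs))"
proof (rule ccontr)
  assume "\<not> quad_cong p (A (take i rs)) (B (take i rs))"
  moreover have "rs ! i \<in> set rs" using rs i by (simp add: residue_lists_def)
  hence "rs ! i \<in> agreements p (A (take i rs)) (B (take i rs))"
    using rs assms(4) by (auto simp: agreements_def residue_lists_def)
  ultimately have "rs \<in> lucky_points p k A B"
    using rs i by (auto simp: lucky_points_def)
  with assms(2) show False ..
qed

text \<open>Backwards from the last round: each accepted quadratic equals the true one, for
  otherwise its value at the next coordinate, which the next round certifies, would be a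
  lucky agreement.\<close>
lemma sumcheck_sound:
  assumes rs: "rs \<in> residue_lists p k" and "0 < k"
    and unlucky: "rs \<notin> lucky_points p k A (honest_poly k f g)"
    and accepts: "sumcheck_accepts p rs A (eval_prefix rs f 0 * eval_prefix rs g 0)"
  shows "quad_sum01 (A []) mod int p = cube_inner k f g mod int p"
proof -
  have len: "length rs = k" using rs by (simp add: residue_lists_def)
  let ?H = "\<lambda>i. honest_poly k f g (take i rs)"
  have cong_if_value: "quad_cong p (A (take i rs)) (?H i)"
    if "i < k" "quad_eval (A (take i rs)) (int (rs ! i)) mod int p = partial_sum rs f g (Suc i) mod int p"
    for i
    using quad_cong_if_not_lucky[OF rs unlucky that(1)] that quad_eval_honest_poly[of i rs f g] len
    by simp
  have "quad_cong p (A (take i rs)) (?H i)" if "i \<le> k - 1" for i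
    using that
  proof (induction rule: inc_induct)
    case base
    show ?case
      using accepts \<open>0 < k\<close> len partial_sum_length[of rs f g]
      by (intro cong_if_value) (auto simp: sumcheck_accepts_def)
  next
    case (step n)
    have "quad_eval (A (take n rs)) (int (rs ! n)) mod int p = quad_sum01 (A (take (Suc n) rs)) mod int p"
      using accepts step.hyps len by (auto simp: sumcheck_accepts_def)
    also have "\<dots> = quad_sum01 (?H (Suc n)) mod int p"
      by (rule quad_cong_sum01[OF step.IH])
    also have "\<dots> = partial_sum rs f g (Suc n) mod int p"
      using quad_sum01_honest_poly[of "Suc n" rs f g] step.hyps len by simp
    finally show ?case
      using step.hyps by (intro cong_if_value) auto
  qed
  hence "quad_sum01 (A []) mod int p = quad_sum01 (?H 0) mod int p"
    using quad_cong_sum01 by fastforce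
  also have "\<dots> = cube_inner k f g mod int p"
    using quad_sum01_honest_poly[of 0 rs f g] partial_sum_0[of rs f g] len \<open>0 < k\<close> by simp
  finally show ?thesis .
qed

lemma sumcheck_complete:
  assumes len: "length rs = k" and "0 < k"
    and honest: "\<And>i. i < k \<Longrightarrow> quad_cong p (A (take i rs)) (honest_poly k f g (take i rs))"
  shows "sumcheck_accepts p rs A (eval_prefix rs f 0 * eval_prefix rs g 0)"
    and "quad_sum01 (A []) mod int p = cube_inner k f g mod int p"
proof -
  have "quad_sum01 (A (take j rs)) mod int p = quad_eval (A (take (j - 1) rs)) (int (rs ! (j - 1))) mod int p"
    if "0 < j" "j < k" for j
  proof -
    have "quad_sum01 (A (take j rs)) mod int p = partial_sum rs f g j mod int p"
      using quad_cong_sum01[OF honest[OF that(2)]] quad_sum01_honest_poly[of j rs f g] that len by simp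
    also have "\<dots> = quad_eval (A (take (j - 1) rs)) (int (rs ! (j - 1))) mod int p"
      using quad_cong_eval[OF honest[of "j - 1"]] quad_eval_honest_poly[of "j - 1" rs f g] that len
      by simp
    finally show ?thesis .
  qed
  moreover have "quad_eval (A (take (k - 1) rs)) (int (rs ! (k - 1))) mod int p
      = (eval_prefix rs f 0 * eval_prefix rs g 0) mod int p"
    using quad_cong_eval[OF honest[of "k - 1"]] quad_eval_honest_poly[of "k - 1" rs f g]
      partial_sum_length[of rs f g] len \<open>0 < k\<close> by simp
  ultimately show "sumcheck_accepts p rs A (eval_prefix rs f 0 * eval_prefix rs g 0)"
    using len by (simp add: sumcheck_accepts_def)
  show "quad_sum01 (A []) mod int p = cube_inner k f g mod int p"
    using quad_cong_sum01[OF honest[of 0]] quad_sum01_honest_poly[of 0 rs f g] partial_sum_0[of rs f g]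
      len \<open>0 < k\<close> by simp
qed

lemma sumcheck_accepts_cong:
  "v mod int p = v' mod int p \<Longrightarrow> sumcheck_accepts p rs A v = sumcheck_accepts p rs A v'"
  by (simp add: sumcheck_accepts_def)

definition bits :: "nat \<Rightarrow> nat \<Rightarrow> bool list" where
  "bits w v = map (bit v) [0..<w]"

definition unbits :: "bool list \<Rightarrow> nat" where
  "unbits bs = horner_sum of_bool 2 bs"

definition unbits_blocks :: "nat \<Rightarrow> nat \<Rightarrow> bool list \<Rightarrow> nat list" where
  "unbits_blocks w k bs = map (\<lambda>i. unbits (take w (drop (i * w) bs))) [0..<k]"

lemma length_bits [simp]: "length (bits w v) = w"
  by (simp add: bits_def)

lemma unbits_bits: "v < 2 ^ w \<Longrightarrow> unbits (bits w v) = v"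
  unfolding unbits_def bits_def by (simp add: horner_sum_bit_eq_take_bit take_bit_nat_eq_self)

lemma take_drop_concat_blocks:
  assumes "\<forall>v\<in>set vs. length (f v) = w" "i < length vs"
  shows "take w (drop (i * w) (concat (map f vs) @ bs)) = f (vs ! i)"
  using assms
proof (induction vs arbitrary: i)
  case Nil
  then show ?case by simp
next
  case (Cons v vs)
  then show ?case by (cases i) (simp_all add: add.commute)
qed

lemma unbits_blocks_concat_bits:
  assumes "\<forall>v\<in>set vs. v < 2 ^ w"
  shows "unbits_blocks w (length vs) (concat (map (bits w) vs) @ bs) = vs"
proof (rule nth_equalityI)
  fix i assume "i < length (unbits_blocks w (length vs) (concat (map (bits w) vs) @ bs))"
  hence i: "i < length vs" by (simp add: unbits_blocks_def)
  thus "unbits_blocks w (length vs) (concat (map (bits w) vs) @ bs) ! i = vs ! i"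
    using assms take_drop_concat_blocks[of vs "bits w" w i bs] by (simp add: unbits_blocks_def unbits_bits)
qed (simp add: unbits_blocks_def)

text \<open>Verifier memory: the number of bits of \<open>x\<close> read, the random point, the values at
  the point of the multilinear extensions of \<open>x\<close> and of the indicator of the first
  hyperedge, that hyperedge's bit of \<open>w\<close>, the sum claimed by the prover in the first round,
  the value the next round must account for, and whether all checks so far passed.\<close>
record vstate =
  cursor :: nat
  point :: "nat list"
  x_value :: int
  edge_value :: int
  edge_bit :: bool
  edge_seen :: bool
  claimed :: int
  target :: int
  consistent :: bool

text \<open>\<open>W1\<close> and \<open>W2\<close> are the bit widths of the stream position and of a residue mod \<open>p\<close>.\<close>
locale bhh_sip =
  fixes n p ell W1 W2 :: nat
begin

definition encode :: "vstate \<Rightarrow> bool list" where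
  "encode st = [edge_bit st, edge_seen st, consistent st] @ bits W1 (cursor st)
     @ concat (map (bits W2) (map nat [x_value st, edge_value st, claimed st, target st] @ point st))"

definition decode :: "bool list \<Rightarrow> vstate" where
  "decode \<sigma> = (let vs = unbits_blocks W2 (4 + ell) (drop (3 + W1) \<sigma>) in
     \<lparr>cursor = unbits (take W1 (drop 3 \<sigma>)), point = drop 4 vs,
      x_value = int (vs ! 0), edge_value = int (vs ! 1), edge_bit = \<sigma> ! 0, edge_seen = \<sigma> ! 1,
      claimed = int (vs ! 2), target = int (vs ! 3), consistent = \<sigma> ! 2\<rparr>)"

definition init_state :: "nat list \<Rightarrow> vstate" where
  "init_state rs = \<lparr>cursor = 0, point = rs, x_value = 0, edge_value = 0, edge_bit = False,
     edge_seen = False, claimed = 0, target = 0, consistent = True\<rparr>"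

text \<open>By the promise all hyperedges give the same answer, so the verifier keeps only the
  first one.\<close>
fun stream_step :: "tok \<Rightarrow> vstate \<Rightarrow> vstate" where
  "stream_step (XBit b) st =
     (if cursor st < n then
        st\<lparr>cursor := Suc (cursor st),
           x_value := (if b then (x_value st + mle_basis (cursor st) (point st)) mod int p else x_value st)\<rparr>
      else st)"
| "stream_step (Edge e b) st =
     (if edge_seen st then st
      else st\<lparr>edge_value := (\<Sum>i\<leftarrow>e. mle_basis i (point st)) mod int p, edge_bit := b, edge_seen := True\<rparr>)"

definition message :: "nat \<Rightarrow> vstate \<Rightarrow> bool list" where
  "message i st = (if i = 0 then [] else bits W2 (point st ! (i - 1)))"

text \<open>Reducing mod \<open>p\<close> keeps arbitrary prover replies within the bit widths of the memory.\<close>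
definition decode_quad :: "bool list \<Rightarrow> quad" where
  "decode_quad a = (let vs = unbits_blocks W2 3 a in (int (vs ! 0) mod int p, int (vs ! 1) mod int p, int (vs ! 2) mod int p))"

definition receive :: "nat \<Rightarrow> quad \<Rightarrow> vstate \<Rightarrow> vstate" where
  "receive i q st = st\<lparr>claimed := (if i = 0 then quad_sum01 q mod int p else claimed st),
     target := quad_eval q (int (point st ! i)) mod int p,
     consistent := (consistent st \<and> (i = 0 \<or> quad_sum01 q mod int p = target st))\<rparr>"

definition verdict :: "vstate \<Rightarrow> bool option" where
  "verdict st = (if consistent st \<and> target st = (x_value st * edge_value st) mod int p
     then Some (odd (claimed st) = edge_bit st) else None)"

definition random_point :: "nat list pmf" where
  "random_point = pmf_of_set (residue_lists p ell)"

text \<open>The empty memory marks the start, when the random point is drawn.\<close>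
definition verifier :: verifier where
  "verifier = \<lparr>v_init = [],
     v_step = (\<lambda>a \<sigma>. if \<sigma> = [] then map_pmf (\<lambda>rs. encode (stream_step a (init_state rs))) random_point
                     else return_pmf (encode (stream_step a (decode \<sigma>)))),
     v_rounds = ell,
     v_msg = (\<lambda>i \<sigma>. return_pmf (message i (decode \<sigma>), encode (decode \<sigma>))),
     v_recv = (\<lambda>i \<sigma> a. return_pmf (encode (receive i (decode_quad a) (decode \<sigma>)))),
     v_out = (\<lambda>\<sigma>. return_pmf (verdict (decode \<sigma>))),
     v_len = (\<lambda>i. W2),
     p_len = (\<lambda>i. 3 * W2)\<rparr>"

lemma verifier_simps [simp]:
  "v_init verifier = []" "v_rounds verifier = ell" "v_len verifier = (\<lambda>i. W2)" "p_len verifier = (\<lambda>i. 3 * W2)"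
  "v_step verifier a \<sigma> = (if \<sigma> = [] then map_pmf (\<lambda>rs. encode (stream_step a (init_state rs))) random_point
                       else return_pmf (encode (stream_step a (decode \<sigma>))))"
  "v_msg verifier i \<sigma> = return_pmf (message i (decode \<sigma>), encode (decode \<sigma>))"
  "v_recv verifier i \<sigma> m = return_pmf (encode (receive i (decode_quad m) (decode \<sigma>)))"
  "v_out verifier \<sigma> = return_pmf (verdict (decode \<sigma>))"
  by (simp_all add: verifier_def)

lemma encode_ne_Nil [simp]: "encode st \<noteq> []"
  by (simp add: encode_def)

lemma length_encode: "length (encode st) = 3 + W1 + (4 + length (point st)) * W2"
  by (simp add: encode_def length_concat o_def sum_list_triv algebra_simps)

lemma point_stream_step [simp]: "point (stream_step a st) = point st"
  by (cases a) auto

lemma point_receive [simp]: "point (receive i q st) = point st"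
  by (simp add: receive_def)

lemma length_point_decode [simp]: "length (point (decode \<sigma>)) = ell"
  by (simp add: decode_def unbits_blocks_def Let_def)

lemma comm_verifier: "comm verifier = ell * (4 * W2)"
  by (simp add: comm_def)

lemma set_pmf_random_point: "0 < p \<Longrightarrow> set_pmf random_point = residue_lists p ell"
proof -
  assume "0 < p"
  hence "replicate ell 0 \<in> residue_lists p ell" by (auto simp: residue_lists_def)
  thus ?thesis unfolding random_point_def by (intro set_pmf_of_set) (auto simp: finite_residue_lists)
qed

lemma space_bounded_verifier: "0 < p \<Longrightarrow> space_bounded verifier (3 + W1 + (4 + ell) * W2)"
  unfolding space_bounded_def
  by (auto simp: length_encode set_pmf_random_point residue_lists_def init_state_def message_def)

end

locale bhh_sip_wf = bhh_sip +
  assumes prime_p: "prime p"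
    and n_less_W1: "n < 2 ^ W1"
    and p_le_W2: "p \<le> 2 ^ W2"
begin

lemma p_pos: "0 < p"
  using prime_p prime_gt_0_nat by blast

definition valid :: "vstate \<Rightarrow> bool" where
  "valid st \<longleftrightarrow> cursor st \<le> n \<and> length (point st) = ell \<and> (\<forall>r\<in>set (point st). r < p)
     \<and> (\<forall>v\<in>{x_value st, edge_value st, claimed st, target st}. 0 \<le> v \<and> v < int p)"

lemma decode_encode:
  assumes "valid st"
  shows "decode (encode st) = st"
proof -
  define vs where "vs = map nat [x_value st, edge_value st, claimed st, target st] @ point st"
  have "nat v < 2 ^ W2" if "0 \<le> v" "v < int p" for v
    using that p_le_W2 nat_less_iff[of v p] by linarith
  hence "\<forall>v\<in>set vs. v < 2 ^ W2"
    using assms p_le_W2 by (auto simp: valid_def vs_def)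
  moreover have "length vs = 4 + ell" using assms by (simp add: valid_def vs_def)
  moreover have "drop (3 + W1) (encode st) = concat (map (bits W2) vs) @ []"
    by (simp add: encode_def vs_def numeral_eq_Suc)
  ultimately have blocks: "unbits_blocks W2 (4 + ell) (drop (3 + W1) (encode st)) = vs"
    using unbits_blocks_concat_bits[of vs W2 "[]"] by simp
  have "cursor st < 2 ^ W1" using assms n_less_W1 by (simp add: valid_def)
  hence cursor: "unbits (take W1 (drop 3 (encode st))) = cursor st"
    by (simp add: encode_def unbits_bits)
  show ?thesis
    unfolding decode_def Let_def blocks cursor
    using assms by (simp add: encode_def vs_def valid_def)
qed

lemma valid_stream_step: "valid st \<Longrightarrow> valid (stream_step a st)"
  using p_pos by (cases a) (auto simp: valid_def)

lemma valid_receive: "valid st \<Longrightarrow> valid (receive i q st)"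
  using p_pos by (auto simp: valid_def receive_def)

lemma valid_init_state: "rs \<in> residue_lists p ell \<Longrightarrow> valid (init_state rs)"
  using p_pos by (auto simp: valid_def init_state_def residue_lists_def)

lemma valid_fold_stream_step: "valid st \<Longrightarrow> valid (fold stream_step as st)"
  by (induction as arbitrary: st) (auto intro: valid_stream_step)

lemma run_stream_encode:
  "valid st \<Longrightarrow> run_stream verifier as (encode st) = return_pmf (encode (fold stream_step as st))"
proof (induction as arbitrary: st)
  case Nil
  then show ?case by simp
next
  case (Cons a as)
  then show ?case by (simp add: decode_encode valid_stream_step bind_return_pmf)
qed

fun rounds :: "prover \<Rightarrow> nat \<Rightarrow> bool list list \<Rightarrow> vstate \<Rightarrow> vstate" where
  "rounds P 0 ms st = st"
| "rounds P (Suc k) ms st =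
     rounds P k (ms @ [message (length ms) st])
       (receive (length ms) (decode_quad (take (3 * W2) (P (ms @ [message (length ms) st])))) st)"

lemma valid_rounds: "valid st \<Longrightarrow> valid (rounds P k ms st)"
  by (induction k arbitrary: ms st) (auto intro: valid_receive)

lemma run_rounds_encode:
  "valid st \<Longrightarrow> run_rounds verifier P k ms (encode st) = return_pmf (encode (rounds P k ms st))"
proof (induction k arbitrary: ms st)
  case 0
  then show ?case by simp
next
  case (Suc k)
  then show ?case by (simp add: decode_encode valid_receive bind_return_pmf)
qed

lemma outcome_eq_map_pmf:
  assumes "toks \<noteq> []"
  shows "outcome verifier P toks =
    map_pmf (\<lambda>rs. verdict (rounds P ell [] (fold stream_step toks (init_state rs)))) random_point"
proof -
  obtain a as where toks: "toks = a # as" using assms by (cases toks) auto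
  have "outcome verifier P toks = bind_pmf random_point (\<lambda>rs.
      bind_pmf (run_stream verifier as (encode (stream_step a (init_state rs))))
        (\<lambda>\<sigma>. bind_pmf (run_rounds verifier P ell [] \<sigma>) (v_out verifier)))"
    by (simp add: outcome_def toks map_pmf_def bind_assoc_pmf bind_return_pmf)
  also have "\<dots> = bind_pmf random_point (\<lambda>rs.
      return_pmf (verdict (rounds P ell [] (fold stream_step toks (init_state rs)))))"
  proof (rule bind_pmf_cong[OF refl])
    fix rs assume "rs \<in> set_pmf random_point"
    hence "valid (stream_step a (init_state rs))"
      using valid_init_state valid_stream_step set_pmf_random_point p_pos by blast
    thus "bind_pmf (run_stream verifier as (encode (stream_step a (init_state rs))))
          (\<lambda>\<sigma>. bind_pmf (run_rounds verifier P ell [] \<sigma>) (v_out verifier))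
        = return_pmf (verdict (rounds P ell [] (fold stream_step toks (init_state rs))))"
      by (simp add: run_stream_encode run_rounds_encode toks decode_encode valid_rounds
          valid_fold_stream_step bind_return_pmf)
  qed
  finally show ?thesis by (simp add: map_pmf_def)
qed

text \<open>The messages of the rounds are the coordinates of the random point (none in round 0);
  a prover thus amounts to a strategy mapping the coordinates revealed so far to a quadratic.\<close>
definition messages :: "nat list \<Rightarrow> bool list list" where
  "messages rs = [] # map (bits W2) rs"

definition strategy :: "prover \<Rightarrow> nat list \<Rightarrow> quad" where
  "strategy P pre = decode_quad (take (3 * W2) (P (messages pre)))"

fun after_rounds :: "prover \<Rightarrow> vstate \<Rightarrow> nat \<Rightarrow> vstate" where
  "after_rounds P st 0 = st"
| "after_rounds P st (Suc j) = receive j (strategy P (take j (point st))) (after_rounds P st j)"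

lemma point_after_rounds [simp]: "point (after_rounds P st j) = point st"
  by (induction j) simp_all

lemma rounds_after_rounds:
  "j + k \<le> length (point st) \<Longrightarrow>
     rounds P k (take j (messages (point st))) (after_rounds P st j) = after_rounds P st (j + k)"
proof (induction k arbitrary: j)
  case 0
  then show ?case by simp
next
  case (Suc k)
  let ?rs = "point st"
  have j: "j < length (messages ?rs)" using Suc.prems by (simp add: messages_def)
  have msg: "message j (after_rounds P st j) = messages ?rs ! j"
    using j by (auto simp: message_def messages_def nth_Cons')
  have sent: "take j (messages ?rs) @ [messages ?rs ! j] = take (Suc j) (messages ?rs)"
    using j by (simp add: take_Suc_conv_app_nth)
  have "take (Suc j) (messages ?rs) = messages (take j ?rs)"
    by (simp add: messages_def take_map)
  hence "rounds P (Suc k) (take j (messages ?rs)) (after_rounds P st j)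
      = rounds P k (take (Suc j) (messages ?rs)) (after_rounds P st (Suc j))"
    using j msg sent by (simp add: strategy_def)
  also have "\<dots> = after_rounds P st (j + Suc k)"
    using Suc.IH[of "Suc j"] Suc.prems by simp
  finally show ?case .
qed

lemma after_rounds_Suc:
  "after_rounds P st (Suc j) = st\<lparr>claimed := quad_sum01 (strategy P []) mod int p,
     target := quad_eval (strategy P (take j (point st))) (int (point st ! j)) mod int p,
     consistent := (consistent st \<and> (\<forall>i. 0 < i \<and> i \<le> j \<longrightarrow>
        quad_sum01 (strategy P (take i (point st))) mod int p
        = quad_eval (strategy P (take (i - 1) (point st))) (int (point st ! (i - 1))) mod int p))\<rparr>"
proof (induction j)
  case 0
  then show ?case by (simp add: receive_def)
next
  case (Suc j)
  let ?ok = "\<lambda>i. quad_sum01 (strategy P (take i (point st))) mod int p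
        = quad_eval (strategy P (take (i - 1) (point st))) (int (point st ! (i - 1))) mod int p"
  have "(\<forall>i. 0 < i \<and> i \<le> Suc j \<longrightarrow> ?ok i) \<longleftrightarrow> (\<forall>i. 0 < i \<and> i \<le> j \<longrightarrow> ?ok i) \<and> ?ok (Suc j)"
    by (auto simp: le_Suc_eq)
  thus ?case
    by (subst after_rounds.simps, subst Suc) (simp add: receive_def conj_assoc)
qed

lemma verdict_rounds:
  assumes "length (point st) = ell" "0 < ell"
  shows "verdict (rounds P ell [] st) =
    (if consistent st \<and> sumcheck_accepts p (point st) (strategy P) (x_value st * edge_value st)
     then Some (odd (quad_sum01 (strategy P []) mod int p) = edge_bit st) else None)"
proof -
  obtain m where m: "ell = Suc m" using assms(2) by (cases ell) auto
  have "rounds P ell [] st = after_rounds P st ell"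
    using rounds_after_rounds[of 0 ell st P] assms(1) by simp
  also have "\<dots> = after_rounds P st (Suc m)" by (simp add: m)
  finally have rounds: "rounds P ell [] st = after_rounds P st (Suc m)" .
  show ?thesis
    unfolding rounds after_rounds_Suc using assms(1) m
    by (auto simp: verdict_def sumcheck_accepts_def less_Suc_eq_le)
qed

end

locale bhh_sip_instance = bhh_sip_wf +
  fixes t :: nat and x :: "nat \<Rightarrow> bool" and Ms :: "nat list list" and w :: "bool list"
  assumes valid_instance: "bhh_instance n t x Ms w"
    and t_less_p: "t < p" and n_le_two_power_ell: "n \<le> 2 ^ ell" and n_pos: "0 < n"
    and ell_pos: "0 < ell" and six_ell_less_p: "6 * ell < p"
begin

definition x_table :: "nat \<Rightarrow> int" where
  "x_table i = of_bool (i < n \<and> x i)"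

definition edge_table :: "nat \<Rightarrow> int" where
  "edge_table i = of_bool (i \<in> set (hd Ms))"

lemma Ms_ne_Nil: "Ms \<noteq> []"
  using valid_instance n_pos by (auto simp: bhh_instance_def perfect_hypermatching_def)

lemma first_edge: "distinct (hd Ms)" "length (hd Ms) = t" "set (hd Ms) \<subseteq> {..<n}"
  using valid_instance Ms_ne_Nil by (auto simp: bhh_instance_def perfect_hypermatching_def)

lemma answer_iff_first_edge: "bhh_yes x Ms w \<longleftrightarrow> edge_parity x (hd Ms) = hd w"
proof -
  have "w \<noteq> []" using valid_instance Ms_ne_Nil by (auto simp: bhh_instance_def)
  thus ?thesis
    using valid_instance Ms_ne_Nil
    by (auto simp: bhh_instance_def bhh_yes_def bhh_no_def hd_conv_nth)
qed

lemma cube_inner_tables: "cube_inner ell x_table edge_table = int (length (filter x (hd Ms)))"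
proof -
  have "cube_inner ell x_table edge_table = (\<Sum>i<2 ^ ell. if i \<in> set (hd Ms) \<and> x i then 1 else 0)"
    unfolding cube_inner_def x_table_def edge_table_def
    by (rule sum.cong) (use first_edge(3) in auto)
  also have "\<dots> = int (card ({..<2 ^ ell} \<inter> {i. i \<in> set (hd Ms) \<and> x i}))"
    by (simp add: sum.If_cases)
  also have "{..<2 ^ ell} \<inter> {i. i \<in> set (hd Ms) \<and> x i} = set (filter x (hd Ms))"
    using first_edge(3) n_le_two_power_ell by auto
  also have "card \<dots> = length (filter x (hd Ms))"
    using first_edge(1) by (simp add: distinct_card del: set_filter)
  finally show ?thesis .
qed

lemma count_less_p: "length (filter x (hd Ms)) < p"
  using length_filter_le[of x "hd Ms"] first_edge(2) t_less_p by simp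

lemma fold_stream_step_xbits:
  "j \<le> n \<Longrightarrow> fold stream_step (map (\<lambda>i. XBit (x i)) [0..<j]) (init_state rs) =
     (init_state rs)\<lparr>cursor := j, x_value := (\<Sum>i<j. if x i then mle_basis i rs else 0) mod int p\<rparr>"
proof (induction j)
  case 0
  then show ?case by (simp add: init_state_def)
next
  case (Suc j)
  then show ?case by (simp add: init_state_def mod_add_left_eq)
qed

lemma fold_stream_step_edges:
  "edge_seen st \<Longrightarrow> fold stream_step (map (\<lambda>(e, b). Edge e b) zs) st = st"
  by (induction zs) auto

lemma fold_stream_step_bhh_stream:
  "fold stream_step (bhh_stream n x Ms w) (init_state rs) =
     (init_state rs)\<lparr>cursor := n, x_value := (\<Sum>i<n. if x i then mle_basis i rs else 0) mod int p,
        edge_value := (\<Sum>i\<leftarrow>hd Ms. mle_basis i rs) mod int p, edge_bit := hd w, edge_seen := True\<rparr>"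
proof -
  have "w \<noteq> []" using valid_instance Ms_ne_Nil by (auto simp: bhh_instance_def)
  hence zip: "zip Ms w = (hd Ms, hd w) # zip (tl Ms) (tl w)"
    using Ms_ne_Nil by (cases Ms; cases w) auto
  show ?thesis
    unfolding bhh_stream_def fold_append o_apply fold_stream_step_xbits[OF order_refl] zip
    by (simp add: fold_stream_step_edges init_state_def)
qed

lemma x_value_eq_eval_prefix:
  assumes "length rs = ell"
  shows "(\<Sum>i<n. if x i then mle_basis i rs else 0) = eval_prefix rs x_table 0"
proof -
  have "eval_prefix rs x_table 0 = (\<Sum>i<2 ^ ell. if i < n then (if x i then mle_basis i rs else 0) else 0)"
    unfolding eval_prefix_0_eq_mle assms x_table_def by (rule sum.cong) auto
  also have "\<dots> = (\<Sum>i\<in>{..<2 ^ ell} \<inter> {..<n}. if x i then mle_basis i rs else 0)"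
    by (simp add: sum.If_cases lessThan_def)
  also have "{..<2 ^ ell} \<inter> {..<n} = {..<n}" using n_le_two_power_ell by auto
  finally show ?thesis by simp
qed

lemma edge_value_eq_eval_prefix:
  assumes "length rs = ell"
  shows "(\<Sum>i\<leftarrow>hd Ms. mle_basis i rs) = eval_prefix rs edge_table 0"
proof -
  have "set (hd Ms) \<subseteq> {..<2 ^ ell}" using first_edge(3) n_le_two_power_ell by auto
  hence "(\<Sum>i\<leftarrow>hd Ms. mle_basis i rs) = (\<Sum>i\<in>{..<2 ^ ell} \<inter> {i. i \<in> set (hd Ms)}. mle_basis i rs)"
    by (simp add: sum_list_distinct_conv_sum_set[OF first_edge(1)] Int_absorb1)
  also have "\<dots> = eval_prefix rs edge_table 0"
    unfolding eval_prefix_0_eq_mle assms edge_table_def by (simp add: sum.If_cases)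
  finally show ?thesis .
qed

definition decision :: "prover \<Rightarrow> nat list \<Rightarrow> bool option" where
  "decision P rs =
     (if sumcheck_accepts p rs (strategy P) (eval_prefix rs x_table 0 * eval_prefix rs edge_table 0)
      then Some (odd (quad_sum01 (strategy P []) mod int p) = hd w) else None)"

lemma outcome_bhh_stream: "outcome verifier P (bhh_stream n x Ms w) = map_pmf (decision P) random_point"
proof -
  have "bhh_stream n x Ms w \<noteq> []" using n_pos by (simp add: bhh_stream_def)
  moreover have "verdict (rounds P ell [] (fold stream_step (bhh_stream n x Ms w) (init_state rs))) = decision P rs"
    if "rs \<in> set_pmf random_point" for rs
  proof -
    have len: "length rs = ell" using that set_pmf_random_point[OF p_pos] by (simp add: residue_lists_def)
    have "(((\<Sum>i<n. if x i then mle_basis i rs else 0) mod int p) * ((\<Sum>i\<leftarrow>hd Ms. mle_basis i rs) mod int p)) mod int p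
        = (eval_prefix rs x_table 0 * eval_prefix rs edge_table 0) mod int p"
      by (simp add: x_value_eq_eval_prefix[OF len] edge_value_eq_eval_prefix[OF len] mod_mult_eq)
    hence "sumcheck_accepts p rs (strategy P)
        (((\<Sum>i<n. if x i then mle_basis i rs else 0) mod int p) * ((\<Sum>i\<leftarrow>hd Ms. mle_basis i rs) mod int p))
      = sumcheck_accepts p rs (strategy P) (eval_prefix rs x_table 0 * eval_prefix rs edge_table 0)"
      by (rule sumcheck_accepts_cong)
    thus ?thesis
      unfolding fold_stream_step_bhh_stream decision_def
      by (subst verdict_rounds) (simp_all add: init_state_def len ell_pos)
  qed
  ultimately show ?thesis
    by (simp add: outcome_eq_map_pmf cong: map_pmf_cong)
qed

lemma parity_cube_inner_tables_mod:
  "(odd (cube_inner ell x_table edge_table mod int p) = hd w) = bhh_yes x Ms w"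
  using count_less_p by (simp add: cube_inner_tables answer_iff_first_edge edge_parity_def)

definition honest_prover :: prover where
  "honest_prover ms = (case honest_poly ell x_table edge_table (map unbits (tl ms)) of
     (a, b, c) \<Rightarrow> concat (map (\<lambda>v. bits W2 (nat (v mod int p))) [a, b, c]))"

lemma strategy_honest_prover:
  assumes "\<forall>r\<in>set pre. r < p"
  shows "quad_cong p (strategy honest_prover pre) (honest_poly ell x_table edge_table pre)"
proof -
  obtain a b c where abc: "honest_poly ell x_table edge_table pre = (a, b, c)"
    by (cases "honest_poly ell x_table edge_table pre") auto
  have "map unbits (tl (messages pre)) = pre"
    using assms p_le_W2 by (induction pre) (auto simp: messages_def unbits_bits)
  moreover have "nat (v mod int p) < 2 ^ W2" for v
  proof -
    have "nat (v mod int p) < p" using p_pos by (simp add: nat_less_iff)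
    thus ?thesis using p_le_W2 by linarith
  qed
  ultimately have "strategy honest_prover pre = (a mod int p, b mod int p, c mod int p)"
    using unbits_blocks_concat_bits[of "map (\<lambda>v. nat (v mod int p)) [a, b, c]" W2 "[]"] p_pos
    by (simp add: strategy_def honest_prover_def abc decode_quad_def numeral_3_eq_3)
  thus ?thesis using quad_cong_mod by (simp add: abc)
qed

lemma decision_honest_prover:
  assumes rs: "rs \<in> residue_lists p ell"
  shows "decision honest_prover rs = Some (bhh_yes x Ms w)"
proof -
  have len: "length rs = ell" using rs by (simp add: residue_lists_def)
  have "quad_cong p (strategy honest_prover (take i rs)) (honest_poly ell x_table edge_table (take i rs))" for i
    using rs by (intro strategy_honest_prover) (auto simp: residue_lists_def dest: in_set_takeD)
  from sumcheck_complete[OF len ell_pos this] show ?thesis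
    by (simp add: decision_def parity_cube_inner_tables_mod)
qed

lemma decision_wrong_imp_lucky:
  assumes rs: "rs \<in> residue_lists p ell" and wrong: "decision P rs = Some (\<not> bhh_yes x Ms w)"
  shows "rs \<in> lucky_points p ell (strategy P) (honest_poly ell x_table edge_table)"
proof (rule ccontr)
  assume "rs \<notin> lucky_points p ell (strategy P) (honest_poly ell x_table edge_table)"
  moreover have "sumcheck_accepts p rs (strategy P) (eval_prefix rs x_table 0 * eval_prefix rs edge_table 0)"
    using wrong by (auto simp: decision_def split: if_splits)
  ultimately have "quad_sum01 (strategy P []) mod int p = cube_inner ell x_table edge_table mod int p"
    using sumcheck_sound[OF rs ell_pos] by blast
  thus False using wrong by (auto simp: decision_def parity_cube_inner_tables_mod split: if_splits)
qed

lemma prob_lucky_points_le: "measure_pmf.prob random_point (lucky_points p ell A B) \<le> 1 / 3"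
proof -
  have "residue_lists p ell \<noteq> {}" using set_pmf_random_point[OF p_pos] set_pmf_not_empty by metis
  moreover have "lucky_points p ell A B \<subseteq> residue_lists p ell" by (auto simp: lucky_points_def)
  ultimately have "measure_pmf.prob random_point (lucky_points p ell A B)
      = card (lucky_points p ell A B) / p ^ ell"
    unfolding random_point_def
    by (simp add: measure_pmf_of_set finite_residue_lists card_residue_lists Int_absorb1)
  also have "\<dots> \<le> 1 / 3"
  proof -
    have "real (card (lucky_points p ell A B)) * p \<le> 2 * ell * real p ^ ell"
      using card_lucky_points[OF prime_p, of ell A B] by (metis of_nat_le_iff of_nat_mult of_nat_power of_nat_numeral)
    also have "\<dots> \<le> real p / 3 * real p ^ ell"
      using six_ell_less_p by (intro mult_right_mono) auto
    finally show ?thesis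
      using p_pos by (simp add: field_simps)
  qed
  finally show ?thesis .
qed

lemma honest_prover_convinces:
  "measure_pmf.prob (outcome verifier honest_prover (bhh_stream n x Ms w)) {Some (bhh_yes x Ms w)} = 1"
proof -
  have "map_pmf (decision honest_prover) random_point = map_pmf (\<lambda>_. Some (bhh_yes x Ms w)) random_point"
    using decision_honest_prover set_pmf_random_point[OF p_pos] by (intro map_pmf_cong) auto
  thus ?thesis by (simp add: outcome_bhh_stream)
qed

lemma every_prover_fails_to_mislead:
  "measure_pmf.prob (outcome verifier P (bhh_stream n x Ms w)) {Some (bhh_yes x Ms w), None} \<ge> 2 / 3"
proof -
  let ?wrong = "decision P -` {Some (\<not> bhh_yes x Ms w)}"
  have "measure_pmf.prob random_point ?wrong
      \<le> measure_pmf.prob random_point (lucky_points p ell (strategy P) (honest_poly ell x_table edge_table))"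
    using decision_wrong_imp_lucky set_pmf_random_point[OF p_pos]
    by (intro measure_pmf.finite_measure_mono_AE) (auto intro!: AE_pmfI)
  also have "\<dots> \<le> 1 / 3" by (rule prob_lucky_points_le)
  finally have "measure_pmf.prob random_point ?wrong \<le> 1 / 3" .
  moreover have "decision P -` {Some (bhh_yes x Ms w), None} = UNIV - ?wrong"
    by (auto simp: vimage_def)
  moreover have "measure_pmf.prob random_point (UNIV - ?wrong) = 1 - measure_pmf.prob random_point ?wrong"
    using measure_pmf.prob_compl[of ?wrong random_point] by simp
  ultimately show ?thesis
    by (simp add: outcome_bhh_stream)
qed

end

theorem sip_for_bhh_exists:
  fixes n t :: nat
  assumes "1 \<le> t" "2 \<le> n"
  defines "ell \<equiv> ceillog2 n" and "b \<equiv> ceillog2 (6 * ceillog2 n + t)"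
  shows "\<exists>V. sip_for_bhh n t V \<and> space_bounded V (4 + ell + (4 + ell) * (2 * b + 7))
           \<and> comm V = ell * (4 * (2 * b + 7))"
proof -
  obtain p :: nat where p: "prime p" "2 ^ b < p" "p \<le> 2 ^ (2 * b + 7)"
    using prime_between_powers_of_two[of b] by blast
  have n_le: "n \<le> 2 ^ ell" unfolding ell_def by (rule le_two_power_ceillog2)
  have "0 < ell" using ceillog2_ge_iff[of n 1] \<open>2 \<le> n\<close> by (simp add: ell_def)
  have "n < 2 ^ Suc ell" using n_le power_strict_increasing[of ell "Suc ell" "2::nat"] by linarith
  have "6 * ell + t \<le> 2 ^ b" unfolding b_def ell_def by (rule le_two_power_ceillog2)
  hence "t < p" "6 * ell < p" using p(2) \<open>1 \<le> t\<close> by linarith+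
  interpret bhh_sip_wf n p ell "Suc ell" "2 * b + 7"
    by unfold_locales (use p \<open>n < 2 ^ Suc ell\<close> in auto)
  have "sip_for_bhh n t verifier"
    unfolding sip_for_bhh_def Let_def
  proof (intro allI impI conjI)
    fix x Ms w assume "bhh_instance n t x Ms w"
    then interpret bhh_sip_instance n p ell "Suc ell" "2 * b + 7" t x Ms w
      by unfold_locales (use \<open>t < p\<close> \<open>6 * ell < p\<close> n_le \<open>2 \<le> n\<close> \<open>0 < ell\<close> in auto)
    show "\<exists>P. 2 / 3 \<le> measure_pmf.prob (outcome verifier P (bhh_stream n x Ms w)) {Some (bhh_yes x Ms w)}"
      using honest_prover_convinces by (intro exI[of _ honest_prover]) simp
    show "2 / 3 \<le> measure_pmf.prob (outcome verifier P (bhh_stream n x Ms w)) {Some (bhh_yes x Ms w), None}"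
      for P using every_prover_fails_to_mislead .
  qed
  moreover have "space_bounded verifier (4 + ell + (4 + ell) * (2 * b + 7))"
    using space_bounded_verifier[OF p_pos] by simp
  ultimately show ?thesis
    using comm_verifier by (intro exI[of _ verifier]) simp
qed

lemma log2_le_self: "1 \<le> t \<Longrightarrow> log 2 (real t) \<le> real t"
proof -
  assume "1 \<le> t"
  have "real t < 2 ^ t" using less_exp[of t] by (metis of_nat_less_iff of_nat_numeral of_nat_power)
  hence "log 2 (real t) < log 2 (2 ^ t)" using \<open>1 \<le> t\<close> by (subst log_less_cancel_iff) auto
  thus ?thesis by (simp add: log_nat_power)
qed

lemma cost_bounds:
  fixes L LL T E B :: real
  assumes "16 \<le> L" "4 \<le> LL" "1 \<le> T" "0 \<le> E" "E \<le> L + 1" "0 \<le> B" "B \<le> 4 + LL + T"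
  shows "4 + E + (4 + E) * (2 * B + 7) \<le> 100 * T * L * LL"
    and "E * (4 * (2 * B + 7)) \<le> 100 * T * L * LL"
proof -
  have "LL \<le> T * LL" "4 * T \<le> T * LL"
    using assms(2,3) by (simp_all add: mult_right_mono[of 1 T LL, simplified] mult_left_mono)
  hence width: "2 * B + 7 \<le> 8 * (T * LL)" using assms by linarith
  have "1 \<le> T * LL" using \<open>LL \<le> T * LL\<close> assms(2) by linarith
  define Q where "Q = L * (T * LL)"
  have "L \<le> Q" using \<open>1 \<le> T * LL\<close> assms(1) by (simp add: Q_def mult_le_cancel_left1)
  have Q: "100 * T * L * LL = 100 * Q" "(2 * L) * (8 * (T * LL)) = 16 * Q"
    by (simp_all add: Q_def algebra_simps)
  have "(4 + E) * (2 * B + 7) \<le> (2 * L) * (8 * (T * LL))"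
    using width assms by (intro mult_mono) auto
  thus "4 + E + (4 + E) * (2 * B + 7) \<le> 100 * T * L * LL"
    using \<open>L \<le> Q\<close> assms Q by linarith
  have "E * (4 * (2 * B + 7)) \<le> (2 * L) * (4 * (8 * (T * LL)))"
    using width assms by (intro mult_mono) auto
  thus "E * (4 * (2 * B + 7)) \<le> 100 * T * L * LL"
    using \<open>L \<le> Q\<close> assms Q by linarith
qed

lemma log_bounds:
  fixes n t :: nat
  assumes "1 \<le> t" "65536 \<le> n"
  shows "16 \<le> log 2 n" and "4 \<le> log 2 (log 2 n)"
    and "real (ceillog2 n) \<le> log 2 n + 1"
    and "real (ceillog2 (6 * ceillog2 n + t)) \<le> 4 + log 2 (log 2 n) + t"
proof -
  have "log 2 (2 ^ 16) \<le> log 2 n" using assms(2) by (subst log_le_cancel_iff) auto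
  thus L: "16 \<le> log 2 n" using log_pow_cancel[of "2::real" 16] by simp
  have "log 2 (2 ^ 4) \<le> log 2 (log 2 n)" using L by (subst log_le_cancel_iff) auto
  thus LL: "4 \<le> log 2 (log 2 n)" using log_pow_cancel[of "2::real" 4] by simp
  show ell: "real (ceillog2 n) \<le> log 2 n + 1"
    using ceillog2_less_log[of n] assms(2) by simp
  have "real (6 * ceillog2 n + t) \<le> 8 * log 2 n * t"
  proof -
    have "real (6 * ceillog2 n + t) \<le> 7 * log 2 n + t" using ell L by simp
    also have "\<dots> \<le> 7 * log 2 n * t + log 2 n * t"
      using L assms(1) by (intro add_mono) (simp_all add: mult_le_cancel_left1 mult_le_cancel_right1)
    finally show ?thesis by (simp add: algebra_simps)
  qed
  hence "log 2 (6 * ceillog2 n + t) \<le> log 2 (8 * log 2 n * t)"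
    using assms(1) L by (subst log_le_cancel_iff) auto
  also have "\<dots> = 3 + log 2 (log 2 n) + log 2 t"
    using L assms(1) log_pow_cancel[of "2::real" 3] by (simp add: log_mult)
  finally show "real (ceillog2 (6 * ceillog2 n + t)) \<le> 4 + log 2 (log 2 n) + t"
    using ceillog2_less_log[of "6 * ceillog2 n + t"] log2_le_self[OF assms(1)] assms(1) by simp
qed

theorem lemma13:
  shows "\<exists>(C::real) N0. \<forall>n t k. t \<ge> 1 \<and> n = k * t \<and> n \<ge> N0 \<longrightarrow>
           (\<exists>V s. sip_for_bhh n t V \<and> space_bounded V s
              \<and> real s \<le> C * real t * log 2 (real n) * log 2 (log 2 (real n))
              \<and> real (comm V) \<le> C * real t * log 2 (real n) * log 2 (log 2 (real n)))"
proof (intro exI[of _ "100::real"] exI[of _ "65536::nat"] allI impI)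
  fix n t k :: nat
  assume "t \<ge> 1 \<and> n = k * t \<and> n \<ge> 65536"
  hence t: "1 \<le> t" and n: "65536 \<le> n" by auto
  define ell b where "ell = ceillog2 n" and "b = ceillog2 (6 * ceillog2 n + t)"
  define s where "s = 4 + ell + (4 + ell) * (2 * b + 7)"
  obtain V where V: "sip_for_bhh n t V" "space_bounded V s" "comm V = ell * (4 * (2 * b + 7))"
    using sip_for_bhh_exists[of t n] t n unfolding ell_def b_def s_def by auto
  have "real s \<le> 100 * real t * log 2 n * log 2 (log 2 n)"
    and "real (comm V) \<le> 100 * real t * log 2 n * log 2 (log 2 n)"
    using cost_bounds[OF log_bounds(1,2)[OF t n] _ _ log_bounds(3)[OF t n] _ log_bounds(4)[OF t n]] t
    unfolding V(3) s_def ell_def b_def by simp_all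
  with V(1,2) show "\<exists>V s. sip_for_bhh n t V \<and> space_bounded V s
      \<and> real s \<le> 100 * real t * log 2 (real n) * log 2 (log 2 (real n))
      \<and> real (comm V) \<le> 100 * real t * log 2 (real n) * log 2 (log 2 (real n))"
    by blast
qed

end
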